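(* Let $n\ge2$, $\omega\in\mathbb{R}^n$, $k\in\mathbb{R}_{>0}^n$ satisfy (IC1) $\sum_\mu\omega_\mu=0$, (IC2) $\omega\ne0$, (IC3) $\left|\frac{\omega_1}{k_1}\right|\le\cdots\le\left|\frac{\omega_n}{k_n}\right|$, and (IC4) $k_1\ge k_2\ge\cdots\ge k_n$. For $\sigma\in\{-1,+1\}^n$ let $f_\sigma(R)=-R+\frac1n\sum_{\mu=1}^n\sigma_\mu\sqrt{k_\mu^2R-\omega_\mu^2}$. Let $\sigma\in\{-1,+1\}^n$ and indices $\mu<\nu$ with $\sigma_\mu=+1$, $\sigma_\nu=-1$, and let $\sigma'$ agree with $\sigma$ except that $\sigma'_\mu=-1$ and $\sigma'_\nu=+1$. If $f_\sigma$ has no positive roots, then $f_{\sigma'}$ has no positive roots.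
   Context: Square roots are nonnegative real square roots; a positive root of $f_\sigma$ is a real $R>0$ with $k_\mu^2R-\omega_\mu^2\ge0$ for all $\mu$ and $f_\sigma(R)=0$. *)

theory Defs
  imports Complex_Main
begin

text \<open>Vectors in R^n are functions nat => real indexed by 1..n.
  A sign vector sigma takes values in {-1,+1} on 1..n.\<close>

definition f_sigma :: "nat \<Rightarrow> (nat \<Rightarrow> real) \<Rightarrow> (nat \<Rightarrow> real) \<Rightarrow> (nat \<Rightarrow> real) \<Rightarrow> real \<Rightarrow> real" where
  "f_sigma n k \<omega> \<sigma> R = - R + (1 / real n) * (\<Sum>\<mu>=1..n. \<sigma> \<mu> * sqrt ((k \<mu>)\<^sup>2 * R - (\<omega> \<mu>)\<^sup>2))"

definition positive_root :: "nat \<Rightarrow> (nat \<Rightarrow> real) \<Rightarrow> (nat \<Rightarrow> real) \<Rightarrow> (nat \<Rightarrow> real) \<Rightarrow> real \<Rightarrow> bool" where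
  "positive_root n k \<omega> \<sigma> R \<longleftrightarrow> R > 0 \<and> (\<forall>\<mu>\<in>{1..n}. (k \<mu>)\<^sup>2 * R - (\<omega> \<mu>)\<^sup>2 \<ge> 0) \<and> f_sigma n k \<omega> \<sigma> R = 0"

end

theory Submission
  imports Defs
begin

text \<open>If \<open>f\<^sub>\<sigma>\<^sub>'(R) = 0\<close>, then \<open>f\<^sub>\<sigma>(R) \<ge> 0\<close>: swapping the signs changes \<open>f\<close> by
  \<open>2(s\<^sub>\<mu> - s\<^sub>\<nu>)/n\<close>, where \<open>s\<^sub>i = sqrt(k\<^sub>i\<^sup>2R - \<omega>\<^sub>i\<^sup>2)\<close>, and (IC3), (IC4) give
  \<open>s\<^sub>\<nu> \<le> s\<^sub>\<mu>\<close> for \<open>\<mu> < \<nu>\<close>. Since \<open>f\<^sub>\<sigma>(R) \<le> -R + O(sqrt R)\<close>, the intermediate value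
  theorem yields a root of \<open>f\<^sub>\<sigma>\<close> beyond \<open>R\<close>, where all radicands remain nonnegative.\<close>

lemma radicand_nonneg_mono:
  fixes k w R R' :: real
  assumes "0 \<le> k\<^sup>2 * R - w\<^sup>2" "R \<le> R'"
  shows "0 \<le> k\<^sup>2 * R' - w\<^sup>2"
  using assms mult_left_mono[of R R' "k\<^sup>2"] by simp

lemma radicand_le_radicand:
  fixes k k' w w' R :: real
  assumes "0 < k'" "k' \<le> k" "\<bar>w / k\<bar> \<le> \<bar>w' / k'\<bar>" "0 \<le> k'\<^sup>2 * R - w'\<^sup>2"
  shows "k'\<^sup>2 * R - w'\<^sup>2 \<le> k\<^sup>2 * R - w\<^sup>2"
proof -
  define a b where "a = (w / k)\<^sup>2" and "b = (w' / k')\<^sup>2"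
  have "0 < k" using assms(1,2) by simp
  then have w: "w\<^sup>2 = k\<^sup>2 * a" and w': "w'\<^sup>2 = k'\<^sup>2 * b"
    using assms(1) by (simp_all add: a_def b_def power_divide)
  have "a \<le> b"
    unfolding a_def b_def using assms(3) by (metis abs_ge_zero power2_abs power_mono)
  have "0 \<le> R - b"
    using assms(1,4) w' by (simp add: right_diff_distrib[symmetric] zero_le_mult_iff)
  then have "k'\<^sup>2 * (R - b) \<le> k\<^sup>2 * (R - b)"
    using assms(1,2) by (intro mult_right_mono power_mono) auto
  also have "\<dots> \<le> k\<^sup>2 * (R - a)"
    using \<open>a \<le> b\<close> by (intro mult_left_mono) auto
  finally show ?thesis
    using w w' by (simp add: algebra_simps)
qed

lemma abs_sqrt_radicand_le:
  fixes k w R :: real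
  assumes "0 \<le> R"
  shows "\<bar>sqrt (k\<^sup>2 * R - w\<^sup>2)\<bar> \<le> \<bar>k\<bar> * sqrt R + \<bar>w\<bar>"
proof -
  have "\<bar>sqrt (k\<^sup>2 * R - w\<^sup>2)\<bar> = sqrt \<bar>k\<^sup>2 * R - w\<^sup>2\<bar>"
    by (simp add: real_sqrt_abs')
  also have "\<dots> \<le> sqrt (k\<^sup>2 * R + w\<^sup>2)"
    using assms by (intro real_sqrt_le_mono) (simp add: abs_le_iff)
  also have "\<dots> \<le> sqrt (k\<^sup>2 * R) + sqrt (w\<^sup>2)"
    using assms by (intro sqrt_add_le_add_sqrt) simp_all
  also have "\<dots> = \<bar>k\<bar> * sqrt R + \<bar>w\<bar>"
    by (simp add: real_sqrt_mult)
  finally show ?thesis .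
qed

lemma isCont_f_sigma: "isCont (f_sigma n k \<omega> \<sigma>) R"
  unfolding f_sigma_def[abs_def] by (intro continuous_intros)

text \<open>No domain condition is needed: \<open>sqrt\<close> of a negative number is a negative real here.\<close>

lemma f_sigma_negative_beyond:
  assumes "\<forall>i\<in>{1..n}. \<bar>\<sigma> i\<bar> \<le> 1"
  shows "\<exists>R\<ge>R\<^sub>0. f_sigma n k \<omega> \<sigma> R < 0"
proof -
  define C where "C = (\<Sum>i=1..n. \<bar>k i\<bar> + \<bar>\<omega> i\<bar>)"
  define R where "R = max R\<^sub>0 (max 1 ((C + 1)\<^sup>2))"
  have "C \<ge> 0" unfolding C_def by (intro sum_nonneg) simp
  have "1 \<le> R" "(C + 1)\<^sup>2 \<le> R"
    unfolding R_def by linarith+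
  then have "1 \<le> sqrt R" "C + 1 \<le> sqrt R"
    using \<open>C \<ge> 0\<close> real_sqrt_le_mono[of "(C + 1)\<^sup>2" R] by auto
  have term_le: "\<sigma> i * sqrt ((k i)\<^sup>2 * R - (\<omega> i)\<^sup>2) \<le> (\<bar>k i\<bar> + \<bar>\<omega> i\<bar>) * sqrt R"
    if "i \<in> {1..n}" for i
  proof -
    have "\<sigma> i * sqrt ((k i)\<^sup>2 * R - (\<omega> i)\<^sup>2)
        \<le> \<bar>\<sigma> i\<bar> * \<bar>sqrt ((k i)\<^sup>2 * R - (\<omega> i)\<^sup>2)\<bar>"
      by (metis abs_ge_self abs_mult)
    also have "\<dots> \<le> \<bar>sqrt ((k i)\<^sup>2 * R - (\<omega> i)\<^sup>2)\<bar>"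
      using assms that by (intro mult_left_le_one_le) auto
    also have "\<dots> \<le> \<bar>k i\<bar> * sqrt R + \<bar>\<omega> i\<bar>"
      using \<open>1 \<le> sqrt R\<close> by (intro abs_sqrt_radicand_le) (simp add: R_def)
    also have "\<dots> \<le> (\<bar>k i\<bar> + \<bar>\<omega> i\<bar>) * sqrt R"
      using \<open>1 \<le> sqrt R\<close> mult_left_mono[of 1 "sqrt R" "\<bar>\<omega> i\<bar>"] by (simp add: distrib_right)
    finally show ?thesis .
  qed
  have sum_le: "(\<Sum>i=1..n. \<sigma> i * sqrt ((k i)\<^sup>2 * R - (\<omega> i)\<^sup>2)) \<le> C * sqrt R"
    unfolding C_def sum_distrib_right by (intro sum_mono term_le)
  have "(1 / real n) * (\<Sum>i=1..n. \<sigma> i * sqrt ((k i)\<^sup>2 * R - (\<omega> i)\<^sup>2))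
      \<le> (1 / real n) * (C * sqrt R)"
    using sum_le by (intro mult_left_mono) auto
  also have "\<dots> \<le> C * sqrt R"
    using \<open>C \<ge> 0\<close> \<open>1 \<le> sqrt R\<close> by (intro mult_left_le_one_le) (auto simp: divide_le_eq_1)
  finally have "f_sigma n k \<omega> \<sigma> R \<le> - R + C * sqrt R"
    unfolding f_sigma_def by simp
  also have "\<dots> < 0"
  proof -
    have "C * sqrt R < (C + 1) * sqrt R" using \<open>1 \<le> sqrt R\<close> by (simp add: distrib_right)
    also have "\<dots> \<le> sqrt R * sqrt R" using \<open>C + 1 \<le> sqrt R\<close> \<open>1 \<le> sqrt R\<close> by (intro mult_right_mono) auto
    also have "\<dots> = R" using \<open>1 \<le> R\<close> by simp
    finally show ?thesis by simp
  qed
  finally show ?thesis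
    by (intro exI[of _ R]) (simp add: R_def)
qed

lemma positive_root_if_f_sigma_nonneg:
  assumes "\<forall>i\<in>{1..n}. \<bar>\<sigma> i\<bar> \<le> 1"
    and "0 < R\<^sub>1" "\<forall>i\<in>{1..n}. 0 \<le> (k i)\<^sup>2 * R\<^sub>1 - (\<omega> i)\<^sup>2"
    and "0 \<le> f_sigma n k \<omega> \<sigma> R\<^sub>1"
  shows "\<exists>R. positive_root n k \<omega> \<sigma> R"
proof -
  obtain R\<^sub>2 where "R\<^sub>1 \<le> R\<^sub>2" "f_sigma n k \<omega> \<sigma> R\<^sub>2 < 0"
    using f_sigma_negative_beyond[OF assms(1)] by blast
  then obtain R where "R\<^sub>1 \<le> R" "R \<le> R\<^sub>2" "f_sigma n k \<omega> \<sigma> R = 0"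
    using IVT2[of "f_sigma n k \<omega> \<sigma>" R\<^sub>2 0 R\<^sub>1] assms(4) isCont_f_sigma by force
  then have "positive_root n k \<omega> \<sigma> R"
    using assms(2,3) radicand_nonneg_mono unfolding positive_root_def by fastforce
  then show ?thesis ..
qed

lemma f_sigma_swap_signs:
  assumes "\<mu> \<in> {1..n}" "\<nu> \<in> {1..n}" "\<mu> \<noteq> \<nu>"
    and "\<forall>i\<in>{1..n}. i \<noteq> \<mu> \<and> i \<noteq> \<nu> \<longrightarrow> \<sigma>' i = \<sigma> i"
    and "\<sigma> \<mu> = 1" "\<sigma> \<nu> = -1" "\<sigma>' \<mu> = -1" "\<sigma>' \<nu> = 1"
  shows "f_sigma n k \<omega> \<sigma> R = f_sigma n k \<omega> \<sigma>' R
    + 2 / real n * (sqrt ((k \<mu>)\<^sup>2 * R - (\<omega> \<mu>)\<^sup>2) - sqrt ((k \<nu>)\<^sup>2 * R - (\<omega> \<nu>)\<^sup>2))"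
proof -
  define s where "s i = sqrt ((k i)\<^sup>2 * R - (\<omega> i)\<^sup>2)" for i
  have "(\<Sum>i=1..n. \<sigma> i * s i) - (\<Sum>i=1..n. \<sigma>' i * s i) = (\<Sum>i=1..n. (\<sigma> i - \<sigma>' i) * s i)"
    by (simp add: sum_subtractf left_diff_distrib)
  also have "\<dots> = (\<Sum>i\<in>{\<mu>, \<nu>}. (\<sigma> i - \<sigma>' i) * s i)"
    using assms(1,2,4) by (intro sum.mono_neutral_right) auto
  also have "\<dots> = 2 * (s \<mu> - s \<nu>)"
    using assms(3,5-8) by simp
  finally have "(\<Sum>i=1..n. \<sigma> i * s i) = (\<Sum>i=1..n. \<sigma>' i * s i) + 2 * (s \<mu> - s \<nu>)"
    by simp
  then show ?thesis
    unfolding f_sigma_def s_def[symmetric] by (simp add: distrib_left)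
qed

theorem lemma4:
  fixes n :: nat and \<omega> k \<sigma> \<sigma>' :: "nat \<Rightarrow> real" and \<mu> \<nu> :: nat
  assumes n2: "n \<ge> 2"
    and kpos: "\<forall>i\<in>{1..n}. k i > 0"
    and IC1: "(\<Sum>i=1..n. \<omega> i) = 0"
    and IC2: "\<exists>i\<in>{1..n}. \<omega> i \<noteq> 0"
    and IC3: "\<forall>i\<in>{1..n}. \<forall>j\<in>{1..n}. i \<le> j \<longrightarrow> \<bar>\<omega> i / k i\<bar> \<le> \<bar>\<omega> j / k j\<bar>"
    and IC4: "\<forall>i\<in>{1..n}. \<forall>j\<in>{1..n}. i \<le> j \<longrightarrow> k j \<le> k i"
    and sig: "\<forall>i\<in>{1..n}. \<sigma> i = 1 \<or> \<sigma> i = -1"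
    and idx: "\<mu> \<in> {1..n}" "\<nu> \<in> {1..n}" "\<mu> < \<nu>"
    and sm: "\<sigma> \<mu> = 1" and sn: "\<sigma> \<nu> = -1"
    and sig': "\<forall>i\<in>{1..n}. i \<noteq> \<mu> \<and> i \<noteq> \<nu> \<longrightarrow> \<sigma>' i = \<sigma> i"
    and sm': "\<sigma>' \<mu> = -1" and sn': "\<sigma>' \<nu> = 1"
    and noroot: "\<not> (\<exists>R. positive_root n k \<omega> \<sigma> R)"
  shows "\<not> (\<exists>R. positive_root n k \<omega> \<sigma>' R)"
proof
  assume "\<exists>R. positive_root n k \<omega> \<sigma>' R"
  then obtain R where R: "0 < R" "\<forall>i\<in>{1..n}. 0 \<le> (k i)\<^sup>2 * R - (\<omega> i)\<^sup>2"
      "f_sigma n k \<omega> \<sigma>' R = 0"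
    unfolding positive_root_def by blast
  have "(k \<nu>)\<^sup>2 * R - (\<omega> \<nu>)\<^sup>2 \<le> (k \<mu>)\<^sup>2 * R - (\<omega> \<mu>)\<^sup>2"
    using idx kpos IC3 IC4 R(2) by (intro radicand_le_radicand) auto
  then have "0 \<le> 2 / real n * (sqrt ((k \<mu>)\<^sup>2 * R - (\<omega> \<mu>)\<^sup>2) - sqrt ((k \<nu>)\<^sup>2 * R - (\<omega> \<nu>)\<^sup>2))"
    by simp
  then have "0 \<le> f_sigma n k \<omega> \<sigma> R"
    using f_sigma_swap_signs[of \<mu> n \<nu> \<sigma>' \<sigma> k \<omega> R] idx sig' sm sn sm' sn' R(3) by simp
  moreover have "\<forall>i\<in>{1..n}. \<bar>\<sigma> i\<bar> \<le> 1"
    using sig by auto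
  ultimately show False
    using positive_root_if_f_sigma_nonneg R(1,2) noroot by blast
qed

end
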